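(* Let $h,v$ be permutations of $\Lambda=\{1,\dots,d\}$ such that $\langle h,v\rangle$ acts transitively on $\Lambda$, let $M\ge0$ be an integer, and let $(\sigma_n)_{n\in\mathbb{Z}}$ be a Sturmian sequence in $\Sigma=\{L,R\}$. Then every sequence $(\mu_n,\sigma_n)_{n\in\mathbb{Z}}\in(\Lambda\times\Sigma)^{\mathbb{Z}}$ satisfying $\mu_{n+1}=\sigma_n\cdot\mu_n$ for all $n$ contains every element of $\Lambda\times\Sigma$.
   Context: Here $L\cdot\lambda=vh^M(\lambda)$ and $R\cdot\lambda=vh^{M+1}(\lambda)$. A Sturmian sequence is a biinfinite sequence over two letters that is not eventually periodic and has exactly $n+1$ distinct subwords of each length $n$. *)

theory Defs
  imports "HOL-Combinatorics.Permutations"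
begin

datatype letter = L | R

inductive_set gen_perms :: "('a \<Rightarrow> 'a) \<Rightarrow> ('a \<Rightarrow> 'a) \<Rightarrow> ('a \<Rightarrow> 'a) set"
  for h v where
  gen_id: "id \<in> gen_perms h v"
| gen_h: "g \<in> gen_perms h v \<Longrightarrow> h \<circ> g \<in> gen_perms h v"
| gen_v: "g \<in> gen_perms h v \<Longrightarrow> v \<circ> g \<in> gen_perms h v"
| gen_hi: "g \<in> gen_perms h v \<Longrightarrow> inv h \<circ> g \<in> gen_perms h v"
| gen_vi: "g \<in> gen_perms h v \<Longrightarrow> inv v \<circ> g \<in> gen_perms h v"

definition transitive_on :: "'a set \<Rightarrow> ('a \<Rightarrow> 'a) \<Rightarrow> ('a \<Rightarrow> 'a) \<Rightarrow> bool" where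
  "transitive_on A h v \<longleftrightarrow> (\<forall>a\<in>A. \<forall>b\<in>A. \<exists>g\<in>gen_perms h v. g a = b)"

fun act :: "('a \<Rightarrow> 'a) \<Rightarrow> ('a \<Rightarrow> 'a) \<Rightarrow> nat \<Rightarrow> letter \<Rightarrow> 'a \<Rightarrow> 'a" where
  "act h v M L x = v ((h ^^ M) x)"
| "act h v M R x = v ((h ^^ (Suc M)) x)"

definition subwords :: "(int \<Rightarrow> 'b) \<Rightarrow> nat \<Rightarrow> 'b list set" where
  "subwords s n = {map (\<lambda>i. s (k + int i)) [0..<n] | k. True}"

definition eventually_periodic :: "(int \<Rightarrow> 'b) \<Rightarrow> bool" where
  "eventually_periodic s \<longleftrightarrow>
     (\<exists>p::int. p > 0 \<and> (\<exists>N. \<forall>n\<ge>N. s (n + p) = s n))"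

definition sturmian :: "(int \<Rightarrow> letter) \<Rightarrow> bool" where
  "sturmian s \<longleftrightarrow> \<not> eventually_periodic s \<and>
     (\<forall>n. finite (subwords s n) \<and> card (subwords s n) = n + 1)"

end

theory Submission
  imports Defs
begin

text \<open>For a factor w of the Sturmian sequence, consider the set of states reached right
  after the occurrences of w.  The letter actions are injective, so extending w on either
  side can only shrink this set; let k be the least cardinality attained.  Take a window
  of minimal cardinality that is moreover right special.  Because a Sturmian sequence has
  a unique right special factor of each length and is recurrent, the reached sets along the
  sequence depend only on the last N letters, giving a labelling of the factors of length N
  by k-sets that is equivariant under the letter actions.  As both left extensions of a
  left special factor share a right extension, such a labelling descends to shorter factors,
  and on the empty word it yields a k-set invariant under both letter actions, hence under
  h and v.  Transitivity forces k = d, and a window of minimal cardinality ending in the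
  letter s then shows that every state is visited at some time when s is read.\<close>

section \<open>Windows of a sequence\<close>

definition window :: "(int \<Rightarrow> 'b) \<Rightarrow> int \<Rightarrow> nat \<Rightarrow> 'b list" where
  "window s i n = map (\<lambda>j. s (i + int j)) [0..<n]"

lemma length_window [simp]: "length (window s i n) = n"
  by (simp add: window_def)

lemma window_0 [simp]: "window s i 0 = []"
  by (simp add: window_def)

lemma nth_window: "j < n \<Longrightarrow> window s i n ! j = s (i + int j)"
  by (simp add: window_def)

lemma window_Suc: "window s i (Suc n) = window s i n @ [s (i + int n)]"
  by (simp add: window_def)

lemma window_add: "window s i (m + n) = window s i m @ window s (i + int m) n"
  by (induction n) (simp_all add: window_Suc algebra_simps)

lemma window_Suc_Cons: "window s i (Suc n) = s i # window s (i + 1) n"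
  using window_add[of s i 1 n] by (simp add: window_def)

lemma tl_window: "tl (window s i (Suc n)) = window s (i + 1) n"
  by (simp add: window_Suc_Cons)

lemma butlast_window: "butlast (window s i (Suc n)) = window s i n"
  by (simp add: window_Suc)

lemma last_window: "last (window s i (Suc n)) = s (i + int n)"
  by (simp add: window_Suc)

lemma subwords_eq_windows: "subwords s n = range (\<lambda>i. window s i n)"
  by (auto simp: subwords_def window_def)

lemma eventually_periodicI:
  assumes "p > 0" and "\<And>x::nat. s (N + int x + p) = s (N + int x)"
  shows "eventually_periodic s"
  unfolding eventually_periodic_def
proof (intro exI conjI allI impI)
  fix n assume "n \<ge> N"
  then have "n = N + int (nat (n - N))" by simp
  then show "s (n + p) = s n" using assms(2)[of "nat (n - N)"] by simp
qed (fact \<open>p > 0\<close>)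

text \<open>By pigeonhole two windows of the tail coincide; then they keep coinciding.\<close>
lemma eventually_periodic_if_windows_determine_successor:
  assumes fin: "finite {window s (P + int j) m | j. True}"
    and det: "\<And>i j. window s (P + int i) m = window s (P + int j) m \<Longrightarrow>
                s (P + int i + int m) = s (P + int j + int m)"
  shows "eventually_periodic s"
proof -
  define g where "g j = window s (P + int j) m" for j
  have "range g = {window s (P + int j) m | j. True}" by (auto simp: g_def)
  then have "\<not> inj g" using fin finite_imageD[of g UNIV] by auto
  then obtain a b where ab: "a < b" "g a = g b"
    unfolding inj_def by (metis linorder_neqE_nat)
  have same: "g (a + x) = g (b + x)" for x
  proof (induction x)
    case (Suc x)
    have "s (P + int (a + x) + int m) = s (P + int (b + x) + int m)"
      using det Suc.IH unfolding g_def by blast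
    then have "window s (P + int (a + x)) (Suc m) = window s (P + int (b + x)) (Suc m)"
      using Suc by (simp add: g_def window_Suc)
    then show ?case
      using tl_window[of s "P + int (a + x)" m] tl_window[of s "P + int (b + x)" m]
      by (simp add: g_def algebra_simps)
  qed (use ab in simp)
  show ?thesis
  proof (rule eventually_periodicI)
    show "int b - int a > 0" using ab by simp
    fix x
    show "s (P + int a + int m + int x + (int b - int a)) = s (P + int a + int m + int x)"
      using det[OF same[of x, unfolded g_def]] by (simp add: algebra_simps)
  qed
qed

section \<open>Factors of a Sturmian sequence\<close>

locale sturmian_word =
  fixes \<sigma> :: "int \<Rightarrow> letter"
  assumes sturmian: "sturmian \<sigma>"
begin

abbreviation factors :: "nat \<Rightarrow> letter list set" where
  "factors n \<equiv> subwords \<sigma> n"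

definition right_special :: "letter list \<Rightarrow> bool" where
  "right_special w \<longleftrightarrow>
     w @ [L] \<in> factors (Suc (length w)) \<and> w @ [R] \<in> factors (Suc (length w))"

lemma finite_factors: "finite (factors n)"
  and card_factors: "card (factors n) = n + 1"
  and not_eventually_periodic: "\<not> eventually_periodic \<sigma>"
  using sturmian by (auto simp: sturmian_def)

lemma window_in_factors [simp]: "window \<sigma> i n \<in> factors n"
  by (simp add: subwords_eq_windows)

lemma factorsE:
  assumes "w \<in> factors n"
  obtains i where "w = window \<sigma> i n"
  using assms by (auto simp: subwords_eq_windows)

lemma length_factor: "w \<in> factors n \<Longrightarrow> length w = n"
  by (auto elim: factorsE)

lemma tl_factor: "w \<in> factors (Suc n) \<Longrightarrow> tl w \<in> factors n"
  by (auto elim!: factorsE simp: tl_window)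

lemma butlast_factor: "w \<in> factors (Suc n) \<Longrightarrow> butlast w \<in> factors n"
  by (auto elim!: factorsE simp: butlast_window)

lemma factor_extend_right:
  assumes "w \<in> factors n"
  obtains a where "w @ [a] \<in> factors (Suc n)"
  using assms by (elim factorsE) (metis window_in_factors window_Suc)

lemma factor_extend_left:
  assumes "w \<in> factors n"
  obtains a where "a # w \<in> factors (Suc n)"
proof -
  from assms obtain i where "w = window \<sigma> i n" by (rule factorsE)
  then have "\<sigma> (i - 1) # w = window \<sigma> (i - 1) (Suc n)" by (simp add: window_Suc_Cons)
  then show ?thesis using that window_in_factors by metis
qed

lemma factors_Suc_0: "factors 1 = {[L], [R]}"
proof -
  have "factors 1 \<subseteq> {[L], [R]}"
  proof
    fix w assume "w \<in> factors 1"
    then obtain a where "w = [a]" using length_factor by (metis length_0_conv length_Suc_conv One_nat_def)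
    then show "w \<in> {[L], [R]}" by (cases a) auto
  qed
  moreover have "card (factors 1) = card {[L], [R]}" using card_factors by simp
  ultimately show ?thesis by (simp add: card_subset_eq)
qed

lemma right_special_of_distinct_successors:
  assumes "window \<sigma> i n = window \<sigma> j n" and "\<sigma> (i + int n) \<noteq> \<sigma> (j + int n)"
  shows "right_special (window \<sigma> i n)"
proof -
  have "window \<sigma> i n @ [\<sigma> (i + int n)] \<in> factors (Suc n)"
    and "window \<sigma> i n @ [\<sigma> (j + int n)] \<in> factors (Suc n)"
    using window_in_factors[of i "Suc n"] window_in_factors[of j "Suc n"] assms(1)
    by (simp_all add: window_Suc)
  then show ?thesis
    using assms(2) unfolding right_special_def
    by (cases "\<sigma> (i + int n)"; cases "\<sigma> (j + int n)") auto
qed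

text \<open>Each factor of length n has one or two right extensions, and there are
  n + 2 factors of length n + 1.\<close>
lemma card_right_special: "card {w \<in> factors n. right_special w} = 1"
proof -
  define B where "B a = {w \<in> factors n. w @ [a] \<in> factors (Suc n)}" for a
  have fin: "finite (B a)" for a unfolding B_def using finite_factors by auto
  have split: "factors (Suc n) = (\<lambda>w. w @ [L]) ` B L \<union> (\<lambda>w. w @ [R]) ` B R"
  proof (intro equalityI subsetI)
    fix y assume y: "y \<in> factors (Suc n)"
    then have "y = butlast y @ [last y]"
      using length_factor by (metis append_butlast_last_id list.size(3) nat.distinct(1))
    moreover have "butlast y \<in> B (last y)"
      using y butlast_factor calculation unfolding B_def by auto
    ultimately show "y \<in> (\<lambda>w. w @ [L]) ` B L \<union> (\<lambda>w. w @ [R]) ` B R"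
      by (cases "last y") auto
  qed (auto simp: B_def)
  have "card (factors (Suc n)) = card (B L) + card (B R)"
    unfolding split by (subst card_Un_disjoint) (auto simp: fin card_image inj_on_def)
  also have "\<dots> = card (B L \<union> B R) + card (B L \<inter> B R)"
    using card_Un_Int fin by blast
  also have "B L \<union> B R = factors n"
    unfolding B_def by (auto elim: factor_extend_right) (metis factor_extend_right letter.exhaust)
  also have "B L \<inter> B R = {w \<in> factors n. right_special w}"
    unfolding B_def right_special_def using length_factor by auto
  finally show ?thesis using card_factors by simp
qed

lemma right_special_factor: "right_special w \<Longrightarrow> w \<in> factors (length w)"
  unfolding right_special_def by (metis butlast_factor butlast_snoc)

lemma right_special_unique:
  assumes "right_special w" "right_special w'" "length w = length w'"
  shows "w = w'"
  using card_right_special[of "length w"] assms right_special_factor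
  by (metis (mono_tags, lifting) card_1_singletonE mem_Collect_eq singletonD)

lemma right_special_exists: "\<exists>w. length w = n \<and> right_special w"
  using card_right_special[of n] length_factor
  by (metis (no_types, lifting) card_1_singletonE mem_Collect_eq singletonI)

lemma right_special_Cons: "right_special (a # w) \<Longrightarrow> right_special w"
  unfolding right_special_def by (metis tl_factor append_Cons length_Cons list.sel(3))

lemma right_special_append: "right_special (u @ w) \<Longrightarrow> right_special w"
  by (induction u) (auto dest: right_special_Cons)

definition tail_factors :: "int \<Rightarrow> nat \<Rightarrow> letter list set" where
  "tail_factors P n = {window \<sigma> (P + int j) n | j. True}"

lemma finite_tail_factors: "finite (tail_factors P n)"
  by (rule finite_subset[OF _ finite_factors[of n]]) (auto simp: tail_factors_def)

lemma butlast_tail_factors: "butlast ` tail_factors P (Suc n) = tail_factors P n"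
  by (auto simp: tail_factors_def butlast_window image_iff) (metis butlast_window)

text \<open>If the tail had as many factors of length n + 1 as of length n, every factor of
  the tail would have a unique right extension within the tail.\<close>
lemma card_tail_factors_strict_mono:
  "card (tail_factors P n) < card (tail_factors P (Suc n))"
proof -
  have "card (tail_factors P n) \<le> card (tail_factors P (Suc n))"
    by (metis butlast_tail_factors finite_tail_factors card_image_le)
  moreover have "card (tail_factors P (Suc n)) \<noteq> card (tail_factors P n)"
  proof
    assume "card (tail_factors P (Suc n)) = card (tail_factors P n)"
    then have inj: "inj_on butlast (tail_factors P (Suc n))"
      by (intro eq_card_imp_inj_on) (simp_all add: finite_tail_factors butlast_tail_factors)
    have "\<sigma> (P + int i + int n) = \<sigma> (P + int j + int n)"
      if "window \<sigma> (P + int i) n = window \<sigma> (P + int j) n" for i j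
    proof -
      have "window \<sigma> (P + int i) (Suc n) = window \<sigma> (P + int j) (Suc n)"
        using inj_onD[OF inj, of "window \<sigma> (P + int i) (Suc n)" "window \<sigma> (P + int j) (Suc n)"]
          that by (auto simp: butlast_window tail_factors_def)
      then show ?thesis by (simp add: window_Suc)
    qed
    then have "eventually_periodic \<sigma>"
      using finite_tail_factors
      by (intro eventually_periodic_if_windows_determine_successor) (auto simp: tail_factors_def)
    then show False using not_eventually_periodic by simp
  qed
  ultimately show ?thesis by simp
qed

lemma tail_factors_eq_factors: "tail_factors P n = factors n"
proof -
  have "card (tail_factors P n) \<ge> n + 1"
  proof (induction n)
    case 0 then show ?case using finite_tail_factors[of P 0] by (auto simp: tail_factors_def card_gt_0_iff)
  next
    case (Suc n) then show ?case using card_tail_factors_strict_mono[of P n] by simp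
  qed
  moreover have "tail_factors P n \<subseteq> factors n" by (auto simp: tail_factors_def)
  ultimately show ?thesis
    using card_factors finite_factors by (metis card_seteq)
qed

lemma factor_occurs_after:
  assumes "w \<in> factors n"
  obtains j where "window \<sigma> (P + int j) n = w"
proof -
  have "w \<in> tail_factors P n" using assms by (simp add: tail_factors_eq_factors)
  then show ?thesis using that by (auto simp: tail_factors_def)
qed

lemma right_special_prefix_exists: "\<exists>n\<ge>n\<^sub>0. right_special (window \<sigma> p n)"
proof (rule ccontr)
  assume "\<not> ?thesis"
  then have not_rs: "\<not> right_special (window \<sigma> p n)" if "n \<ge> n\<^sub>0" for n
    using that by auto
  obtain j where j: "window \<sigma> (p + 1 + int j) n\<^sub>0 = window \<sigma> p n\<^sub>0"
    by (rule factor_occurs_after[OF window_in_factors])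
  define q where "q = p + 1 + int j"
  have agree: "window \<sigma> q (n\<^sub>0 + x) = window \<sigma> p (n\<^sub>0 + x)" for x
  proof (induction x)
    case (Suc x)
    then have "\<sigma> (q + int (n\<^sub>0 + x)) = \<sigma> (p + int (n\<^sub>0 + x))"
      using right_special_of_distinct_successors[of q "n\<^sub>0 + x" p] not_rs[of "n\<^sub>0 + x"] by auto
    then show ?case using Suc by (simp add: window_Suc)
  qed (use j q_def in simp)
  have "eventually_periodic \<sigma>"
  proof (rule eventually_periodicI)
    show "q - p > 0" by (simp add: q_def)
    fix x
    show "\<sigma> (p + int x + (q - p)) = \<sigma> (p + int x)"
      using arg_cong[OF agree[of "Suc x"], of "\<lambda>w. w ! x"] by (simp add: nth_window algebra_simps)
  qed
  then show False using not_eventually_periodic by simp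
qed

lemma windows_agree_until_right_special:
  assumes "window \<sigma> a n = window \<sigma> b n"
    and "\<And>i. i < x \<Longrightarrow> \<not> right_special (window \<sigma> (a + int i) n)"
  shows "window \<sigma> a (n + x) = window \<sigma> b (n + x)"
  using assms(2)
proof (induction x)
  case (Suc x)
  then have IH: "window \<sigma> a (x + n) = window \<sigma> b (x + n)" by (simp add: add.commute)
  then have suffix: "window \<sigma> (a + int x) n = window \<sigma> (b + int x) n"
    by (simp add: window_add)
  have "\<sigma> (a + int x + int n) = \<sigma> (b + int x + int n)"
    using right_special_of_distinct_successors[OF suffix] Suc.prems[of x] by auto
  then show ?case using IH by (simp add: window_Suc algebra_simps)
qed (use assms(1) in simp)

text \<open>If z is left special, then z is right special, as is the unique right special
  factor of length n + 1, which therefore is L z or R z.\<close>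
lemma left_special_common_right_extension:
  assumes l: "L # z \<in> factors (Suc n)" and r: "R # z \<in> factors (Suc n)"
  obtains a where "L # z @ [a] \<in> factors (Suc (Suc n))" and "R # z @ [a] \<in> factors (Suc (Suc n))"
proof -
  obtain x where x: "L # z @ [x] \<in> factors (Suc (Suc n))"
    using factor_extend_right[OF l] by auto
  obtain y where y: "R # z @ [y] \<in> factors (Suc (Suc n))"
    using factor_extend_right[OF r] by auto
  show ?thesis
  proof (cases "x = y")
    case True then show ?thesis using that x y by simp
  next
    case False
    have lz: "length z = n" using length_factor[OF l] by simp
    have "z @ [x] \<in> factors (Suc n)" "z @ [y] \<in> factors (Suc n)"
      using tl_factor[OF x] tl_factor[OF y] by simp_all
    then have "right_special z"
      using False lz unfolding right_special_def by (cases x; cases y) auto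
    obtain w where w: "length w = Suc n" "right_special w"
      using right_special_exists by blast
    then obtain c where "w = c # z"
      using right_special_unique[OF right_special_Cons \<open>right_special z\<close>] lz
      by (cases w) auto
    then have "c # z @ [L] \<in> factors (Suc (Suc n))" "c # z @ [R] \<in> factors (Suc (Suc n))"
      using w unfolding right_special_def by auto
    then show ?thesis using that x y by (cases c; cases x; cases y) auto
  qed
qed

end

section \<open>States reached after a factor\<close>

locale sturmian_cocycle = sturmian_word \<sigma> for \<sigma> :: "int \<Rightarrow> letter" +
  fixes f :: "letter \<Rightarrow> 'a \<Rightarrow> 'a" and \<mu> :: "int \<Rightarrow> 'a"
  assumes inj_f: "inj (f a)"
    and \<mu>_Suc: "\<mu> (n + 1) = f (\<sigma> n) (\<mu> n)"
    and finite_range_\<mu>: "finite (range \<mu>)"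
begin

definition run :: "letter list \<Rightarrow> 'a \<Rightarrow> 'a" where
  "run u x = foldl (\<lambda>x a. f a x) x u"

lemma run_Nil [simp]: "run [] x = x"
  and run_snoc [simp]: "run (u @ [a]) x = f a (run u x)"
  by (simp_all add: run_def)

lemma inj_run: "inj (run u)"
proof (induction u rule: rev_induct)
  case (snoc a u)
  have "run (u @ [a]) = f a \<circ> run u" by auto
  then show ?case by (simp only:) (rule inj_compose[OF inj_f snoc.IH])
qed (simp add: inj_on_def)

lemma card_f_image [simp]: "card (f a ` A) = card A"
  by (rule card_image) (rule inj_on_subset[OF inj_f subset_UNIV])

lemma card_run_image [simp]: "card (run u ` A) = card A"
  by (rule card_image) (rule inj_on_subset[OF inj_run subset_UNIV])

lemma \<mu>_add: "\<mu> (i + int n) = run (window \<sigma> i n) (\<mu> i)"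
proof (induction n)
  case (Suc n)
  have "i + int (Suc n) = (i + int n) + 1" by simp
  then show ?case using Suc \<mu>_Suc[of "i + int n"] by (simp only: window_Suc run_snoc)
qed simp

definition end_states :: "letter list \<Rightarrow> 'a set" where
  "end_states w = {\<mu> (i + int (length w)) | i. window \<sigma> i (length w) = w}"

lemma end_states_subset: "end_states w \<subseteq> range \<mu>"
  by (auto simp: end_states_def)

lemma finite_end_states: "finite (end_states w)"
  using end_states_subset finite_range_\<mu> by (rule finite_subset)

lemma end_states_window_nonempty: "end_states (window \<sigma> i n) \<noteq> {}"
  by (auto simp: end_states_def)

lemma end_states_append_left: "end_states (u @ w) \<subseteq> end_states w"
proof
  fix x assume "x \<in> end_states (u @ w)"
  then obtain i where i: "window \<sigma> i (length u + length w) = u @ w"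
    and x: "x = \<mu> (i + int (length u + length w))"
    by (auto simp: end_states_def)
  have "window \<sigma> (i + int (length u)) (length w) = w" using i by (simp add: window_add)
  moreover have "x = \<mu> (i + int (length u) + int (length w))" using x by (simp add: algebra_simps)
  ultimately show "x \<in> end_states w" by (auto simp: end_states_def)
qed

lemma end_states_append_right: "end_states (w @ u) \<subseteq> run u ` end_states w"
proof
  fix x assume "x \<in> end_states (w @ u)"
  then obtain i where i: "window \<sigma> i (length w + length u) = w @ u"
    and x: "x = \<mu> (i + int (length w + length u))"
    by (auto simp: end_states_def)
  have "window \<sigma> i (length w) = w" "window \<sigma> (i + int (length w)) (length u) = u"
    using i by (simp_all add: window_add)
  moreover have "x = run u (\<mu> (i + int (length w)))"
    using x \<mu>_add[of "i + int (length w)" "length u"] calculation(2) by (simp add: algebra_simps)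
  ultimately show "x \<in> run u ` end_states w" by (auto simp: end_states_def)
qed

lemma card_end_states_append:
  "card (end_states (u @ w @ v)) \<le> card (end_states w)"
proof -
  have "card (end_states (u @ w @ v)) \<le> card (end_states (w @ v))"
    by (intro card_mono finite_end_states end_states_append_left)
  also have "\<dots> \<le> card (run v ` end_states w)"
    using end_states_append_right by (intro card_mono finite_imageI finite_end_states)
  also have "\<dots> = card (end_states w)" by simp
  finally show ?thesis .
qed

definition min_card :: nat where
  "min_card = (LEAST c. \<exists>i n. card (end_states (window \<sigma> i n)) = c)"

lemma min_card_attained: "\<exists>i n. card (end_states (window \<sigma> i n)) = min_card"
  unfolding min_card_def by (rule LeastI_ex) blast

lemma min_card_le: "min_card \<le> card (end_states (window \<sigma> i n))"
  unfolding min_card_def by (rule Least_le) blast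

lemma min_card_pos: "min_card > 0"
  using min_card_attained end_states_window_nonempty finite_end_states
  by (metis card_gt_0_iff)

definition minimal_window :: "int \<Rightarrow> nat \<Rightarrow> bool" where
  "minimal_window i n \<longleftrightarrow> card (end_states (window \<sigma> i n)) = min_card"

lemma minimal_window_mono:
  assumes "minimal_window i n" and "i' \<le> i" and "i + int n \<le> i' + int n'"
  shows "minimal_window i' n'"
proof -
  define a where "a = nat (i - i')"
  define b where "b = n' - (a + n)"
  have "n' = a + (n + b)" and "i = i' + int a"
    using assms(2,3) by (simp_all add: a_def b_def)
  then have "window \<sigma> i' n' = window \<sigma> i' a @ window \<sigma> i n @ window \<sigma> (i + int n) b"
    using window_add[of \<sigma> i' a "n + b"] window_add[of \<sigma> i n b] by simp
  then have "card (end_states (window \<sigma> i' n')) \<le> min_card"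
    using card_end_states_append assms(1) by (metis minimal_window_def)
  then show ?thesis using min_card_le[of i' n'] by (simp add: minimal_window_def)
qed

lemma end_states_extend_minimal_window:
  assumes "minimal_window i n"
  shows "end_states (window \<sigma> i (n + m)) = run (window \<sigma> (i + int n) m) ` end_states (window \<sigma> i n)"
proof (rule card_subset_eq)
  show "end_states (window \<sigma> i (n + m)) \<subseteq> run (window \<sigma> (i + int n) m) ` end_states (window \<sigma> i n)"
    using end_states_append_right by (simp add: window_add)
  have "minimal_window i (n + m)" using assms by (rule minimal_window_mono) simp_all
  then show "card (end_states (window \<sigma> i (n + m))) =
      card (run (window \<sigma> (i + int n) m) ` end_states (window \<sigma> i n))"
    using assms by (simp add: minimal_window_def)
qed (simp add: finite_end_states)

definition consistent_labelling :: "nat \<Rightarrow> (letter list \<Rightarrow> 'a set) \<Rightarrow> bool" where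
  "consistent_labelling n E \<longleftrightarrow>
     (\<forall>y \<in> factors (Suc n). E (tl y) = f (last y) ` E (butlast y)) \<and>
     (\<forall>z \<in> factors n. E z \<subseteq> range \<mu> \<and> card (E z) = min_card)"

context
  fixes t\<^sub>0 :: int and N :: nat
  assumes minimal: "minimal_window t\<^sub>0 N" and special: "right_special (window \<sigma> t\<^sub>0 N)"
begin

definition reached :: "nat \<Rightarrow> 'a set" where
  "reached j = end_states (window \<sigma> t\<^sub>0 (N + j))"

lemma card_reached: "card (reached j) = min_card"
  using minimal_window_mono[OF minimal, of t\<^sub>0 "N + j"]
  by (simp add: reached_def minimal_window_def)

lemma reached_add: "reached (j + x) = run (window \<sigma> (t\<^sub>0 + int (N + j)) x) ` reached j"
  using end_states_extend_minimal_window[of t\<^sub>0 "N + j" x] minimal_window_mono[OF minimal]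
  by (simp add: reached_def add.assoc)

lemma reached_at_right_special:
  assumes "right_special (window \<sigma> (t\<^sub>0 + int j) N)"
  shows "reached j = end_states (window \<sigma> t\<^sub>0 N)"
proof (rule card_subset_eq)
  have "window \<sigma> (t\<^sub>0 + int j) N = window \<sigma> t\<^sub>0 N"
    using right_special_unique[OF assms special] by simp
  then show "reached j \<subseteq> end_states (window \<sigma> t\<^sub>0 N)"
    using end_states_append_left window_add[of \<sigma> t\<^sub>0 j N]
    by (metis reached_def add.commute)
  show "card (reached j) = card (end_states (window \<sigma> t\<^sub>0 N))"
    using card_reached minimal by (simp add: minimal_window_def)
qed (rule finite_end_states)

text \<open>Follow both occurrences of the window to the right until it becomes the right special
  factor: up to then the letters agree, at that point both reached sets coincide,
  and the injectivity of run transports the equality back.\<close>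
lemma reached_determined_by_window:
  assumes "window \<sigma> (t\<^sub>0 + int j) N = window \<sigma> (t\<^sub>0 + int j') N"
  shows "reached j = reached j'"
proof -
  have "\<exists>x. right_special (window \<sigma> (t\<^sub>0 + int (j + x)) N)"
  proof -
    obtain n where "n \<ge> N" and rs: "right_special (window \<sigma> (t\<^sub>0 + int j) n)"
      using right_special_prefix_exists by blast
    then have "window \<sigma> (t\<^sub>0 + int j) n =
        window \<sigma> (t\<^sub>0 + int j) (n - N) @ window \<sigma> (t\<^sub>0 + int j + int (n - N)) N"
      using window_add[of \<sigma> "t\<^sub>0 + int j" "n - N" N] by simp
    then have "right_special (window \<sigma> (t\<^sub>0 + int j + int (n - N)) N)"
      using rs right_special_append by metis
    then show ?thesis by (intro exI[of _ "n - N"]) (simp add: add.assoc)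
  qed
  define x where "x = (LEAST x. right_special (window \<sigma> (t\<^sub>0 + int (j + x)) N))"
  have rs: "right_special (window \<sigma> (t\<^sub>0 + int (j + x)) N)"
    unfolding x_def by (rule LeastI_ex) fact
  have "\<not> right_special (window \<sigma> (t\<^sub>0 + int j + int i) N)" if "i < x" for i
    using not_less_Least[OF that[unfolded x_def]] by (simp add: add.assoc)
  then have "window \<sigma> (t\<^sub>0 + int j) (N + x) = window \<sigma> (t\<^sub>0 + int j') (N + x)"
    using windows_agree_until_right_special[OF assms] by blast
  then have ext: "window \<sigma> (t\<^sub>0 + int (N + j)) x = window \<sigma> (t\<^sub>0 + int (N + j')) x"
    and shifted: "window \<sigma> (t\<^sub>0 + int (j + x)) N = window \<sigma> (t\<^sub>0 + int (j' + x)) N"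
    using window_add[of \<sigma> "t\<^sub>0 + int j" N x] window_add[of \<sigma> "t\<^sub>0 + int j'" N x]
      window_add[of \<sigma> "t\<^sub>0 + int j" x N] window_add[of \<sigma> "t\<^sub>0 + int j'" x N]
    by (simp_all add: algebra_simps)
  have "reached (j + x) = reached (j' + x)"
    using reached_at_right_special rs shifted by metis
  then have "run (window \<sigma> (t\<^sub>0 + int (N + j')) x) ` reached j =
      run (window \<sigma> (t\<^sub>0 + int (N + j')) x) ` reached j'"
    using reached_add[of j x] reached_add[of j' x] unfolding ext by simp
  then show ?thesis using inj_run by (simp add: inj_image_eq_iff)
qed

lemma consistent_labelling_exists: "\<exists>E. consistent_labelling N E"
proof -
  define E where "E z = reached (SOME j. window \<sigma> (t\<^sub>0 + int j) N = z)" for z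
  have E: "E (window \<sigma> (t\<^sub>0 + int j) N) = reached j" for j
    unfolding E_def by (rule reached_determined_by_window, rule someI) (rule refl)
  have "consistent_labelling N E"
    unfolding consistent_labelling_def
  proof (intro conjI ballI)
    fix y assume "y \<in> factors (Suc N)"
    then obtain j where y: "y = window \<sigma> (t\<^sub>0 + int j) (Suc N)"
      by (metis factor_occurs_after)
    have "E (tl y) = reached (j + 1)"
      using E[of "j + 1"] by (simp add: y tl_window algebra_simps)
    also have "\<dots> = f (last y) ` reached j"
      using reached_add[of j 1] by (simp add: y last_window window_Suc run_def algebra_simps)
    also have "\<dots> = f (last y) ` E (butlast y)"
      by (simp add: y butlast_window E)
    finally show "E (tl y) = f (last y) ` E (butlast y)" .
  next
    fix z assume "z \<in> factors N"
    then obtain j where z: "z = window \<sigma> (t\<^sub>0 + int j) N"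
      by (metis factor_occurs_after)
    show "E z \<subseteq> range \<mu>" using end_states_subset by (simp add: z E reached_def)
    show "card (E z) = min_card" by (simp add: z E card_reached)
  qed
  then show ?thesis by blast
qed

end

lemma consistent_labelling_left_letter_irrelevant:
  assumes E: "consistent_labelling (Suc n) E"
    and a: "a # z \<in> factors (Suc n)" and b: "b # z \<in> factors (Suc n)"
  shows "E (a # z) = E (b # z)"
proof -
  have step: "E (z @ [c]) = f c ` E (d # z)" if "d # z @ [c] \<in> factors (Suc (Suc n))" for c d
    using E that unfolding consistent_labelling_def by (force simp: butlast_append)
  have "E (L # z) = E (R # z)" if l: "L # z \<in> factors (Suc n)" and r: "R # z \<in> factors (Suc n)"
  proof -
    obtain c where "L # z @ [c] \<in> factors (Suc (Suc n))" "R # z @ [c] \<in> factors (Suc (Suc n))"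
      using left_special_common_right_extension[OF l r] .
    then have "f c ` E (L # z) = f c ` E (R # z)" using step by metis
    then show ?thesis using inj_f by (simp add: inj_image_eq_iff)
  qed
  then show ?thesis using a b by (cases a; cases b) auto
qed

lemma consistent_labelling_Suc:
  assumes E: "consistent_labelling (Suc n) E"
  shows "\<exists>E'. consistent_labelling n E'"
proof -
  define E' where "E' z = E ((SOME a. a # z \<in> factors (Suc n)) # z)" for z
  have E': "E' z = E (a # z)" if a: "a # z \<in> factors (Suc n)" for a z
  proof -
    have "(SOME a. a # z \<in> factors (Suc n)) # z \<in> factors (Suc n)"
      using a by (rule someI)
    then show ?thesis
      unfolding E'_def by (rule consistent_labelling_left_letter_irrelevant[OF E _ a])
  qed
  have "consistent_labelling n E'"
    unfolding consistent_labelling_def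
  proof (intro conjI ballI)
    fix y assume y: "y \<in> factors (Suc n)"
    obtain a where a: "a # y \<in> factors (Suc (Suc n))" using factor_extend_left[OF y] .
    have "y \<noteq> []" using length_factor[OF y] by auto
    then have tl: "E' (tl y) = E y"
      using E'[of "hd y" "tl y"] y by simp
    have butlast: "E' (butlast y) = E (a # butlast y)"
      using E' butlast_factor[OF a] \<open>y \<noteq> []\<close> by simp
    have "E (tl (a # y)) = f (last (a # y)) ` E (butlast (a # y))"
      using E a unfolding consistent_labelling_def by blast
    then show "E' (tl y) = f (last y) ` E' (butlast y)"
      using tl butlast \<open>y \<noteq> []\<close> by simp
  next
    fix z assume z: "z \<in> factors n"
    obtain a where a: "a # z \<in> factors (Suc n)" using factor_extend_left[OF z] .
    then show "E' z \<subseteq> range \<mu>" and "card (E' z) = min_card"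
      using E E'[OF a] unfolding consistent_labelling_def by auto
  qed
  then show ?thesis by blast
qed

lemma consistent_labelling_0: "\<exists>E. consistent_labelling 0 E"
proof -
  obtain i n where min: "minimal_window i n"
    using min_card_attained by (auto simp: minimal_window_def)
  obtain N where "N \<ge> n" and special: "right_special (window \<sigma> i N)"
    using right_special_prefix_exists by blast
  from min have "minimal_window i N"
    by (rule minimal_window_mono) (simp_all add: \<open>N \<ge> n\<close>)
  then obtain E where "consistent_labelling N E"
    using consistent_labelling_exists special by blast
  then show ?thesis
    by (induction N arbitrary: E) (auto dest: consistent_labelling_Suc)
qed

lemma invariant_set_of_min_card:
  obtains S where "S \<subseteq> range \<mu>" "card S = min_card" "\<And>a. f a ` S = S"
proof -
  obtain E where E: "consistent_labelling 0 E" using consistent_labelling_0 ..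
  have inv: "f a ` E [] = E []" for a
  proof -
    have "[a] \<in> factors (Suc 0)" using factors_Suc_0 by (cases a) auto
    then have "E (tl [a]) = f (last [a]) ` E (butlast [a])"
      using E unfolding consistent_labelling_def by blast
    then show ?thesis by simp
  qed
  have "[] \<in> factors 0" using window_in_factors[of 0 0] by simp
  then have "E [] \<subseteq> range \<mu>" "card (E []) = min_card"
    using E unfolding consistent_labelling_def by blast+
  then show ?thesis using inv by (rule that)
qed

lemma min_card_states_at_letter:
  obtains A where "A \<subseteq> {\<mu> n | n. \<sigma> n = a}" "card A = min_card"
proof -
  obtain i n where min: "minimal_window i n"
    using min_card_attained by (auto simp: minimal_window_def)
  have "[a] \<in> factors 1" using factors_Suc_0 by (cases a) auto
  then obtain j where j: "window \<sigma> (i + int n + int j) 1 = [a]"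
    by (rule factor_occurs_after)
  define w where "w = window \<sigma> i (n + j)"
  have wa: "window \<sigma> i (Suc (n + j)) = w @ [a]"
    using j by (simp add: w_def window_Suc window_def algebra_simps)
  define A where "A = {\<mu> (k + int (length w)) | k. window \<sigma> k (Suc (length w)) = w @ [a]}"
  have sub: "A \<subseteq> {\<mu> n | n. \<sigma> n = a}"
    unfolding A_def by (auto simp: window_Suc)
  have "end_states (w @ [a]) = f a ` A"
  proof (intro equalityI subsetI)
    fix x assume "x \<in> end_states (w @ [a])"
    then obtain k where k: "window \<sigma> k (Suc (length w)) = w @ [a]"
      and x: "x = \<mu> (k + int (length w) + 1)"
      by (auto simp: end_states_def algebra_simps)
    then have "x = f a (\<mu> (k + int (length w)))" by (simp add: \<mu>_Suc window_Suc)
    then show "x \<in> f a ` A" using k by (auto simp: A_def)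
  next
    fix x assume "x \<in> f a ` A"
    then obtain k where k: "window \<sigma> k (Suc (length w)) = w @ [a]"
      and x: "x = f a (\<mu> (k + int (length w)))"
      by (auto simp: A_def)
    then have "x = \<mu> (k + int (length (w @ [a])))"
      using \<mu>_Suc[of "k + int (length w)"] by (simp add: window_Suc algebra_simps)
    then show "x \<in> end_states (w @ [a])" using k by (auto simp: end_states_def)
  qed
  moreover have "minimal_window i (Suc (n + j))"
    using min by (rule minimal_window_mono) simp_all
  ultimately have "card A = min_card"
    by (simp add: wa minimal_window_def)
  with sub show ?thesis by (rule that)
qed

end

section \<open>Actions of two permutations\<close>

lemma inj_act:
  assumes "inj h" "inj v"
  shows "inj (act h v M a)"
proof -
  have "inj (v \<circ> h ^^ n)" for n
    using assms by (intro inj_compose inj_fn)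
  moreover have "act h v M a = v \<circ> h ^^ (case a of L \<Rightarrow> M | R \<Rightarrow> Suc M)"
    by (cases a) (simp_all add: fun_eq_iff del: funpow.simps)
  ultimately show ?thesis by simp
qed

lemma gen_perms_image_eq:
  assumes "g \<in> gen_perms h v" and "inj h" "inj v" and "h ` S = S" "v ` S = S"
  shows "g ` S = S"
proof -
  have "inv h ` S = S" "inv v ` S = S"
    using image_inv_f_f[OF assms(2), of S] image_inv_f_f[OF assms(3), of S] assms(4,5) by simp_all
  with assms show ?thesis
    by (induction rule: gen_perms.induct) (simp_all only: image_comp[symmetric] image_id id_apply)
qed

lemma transitive_on_invariant_eq:
  assumes "transitive_on A h v" and "inj h" "inj v"
    and "S \<subseteq> A" "S \<noteq> {}" and "h ` S = S" "v ` S = S"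
  shows "S = A"
proof
  obtain a where "a \<in> S" using assms(5) by blast
  show "A \<subseteq> S"
  proof
    fix b assume "b \<in> A"
    then obtain g where "g \<in> gen_perms h v" "g a = b"
      using assms(1,4) \<open>a \<in> S\<close> unfolding transitive_on_def by blast
    moreover have "g ` S = S"
      using gen_perms_image_eq[OF \<open>g \<in> gen_perms h v\<close> assms(2,3,6,7)] .
    ultimately show "b \<in> S" using \<open>a \<in> S\<close> by blast
  qed
qed (fact \<open>S \<subseteq> A\<close>)

text \<open>Since R acts as L after h, a set invariant under both letters is invariant
  under h, hence under h^M, hence under v.\<close>
lemma act_invariant_imp_generators_invariant:
  assumes "inj h" "inj v" and "\<And>a. act h v M a ` S = S"
  shows "h ` S = S" and "v ` S = S"
proof -
  have L: "act h v M L = v \<circ> (h ^^ M)" and R: "act h v M R = act h v M L \<circ> h"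
    by (auto simp: funpow_Suc_right simp del: funpow.simps)
  have "act h v M L ` h ` S = act h v M L ` S"
    using assms(3)[of R] assms(3)[of L] by (simp add: R image_comp)
  then show h: "h ` S = S"
    using inj_act[OF assms(1,2)] by (simp add: inj_image_eq_iff del: act.simps)
  have "(h ^^ n) ` S = S" for n
    by (induction n) (simp_all add: image_image[symmetric] h)
  moreover have "act h v M L ` S = v ` (h ^^ M) ` S"
    unfolding L by (rule image_comp[symmetric])
  ultimately show "v ` S = S" using assms(3)[of L] by simp
qed

theorem lemma5p7:
  fixes d M :: nat and h v :: "nat \<Rightarrow> nat"
    and \<mu> :: "int \<Rightarrow> nat" and \<sigma> :: "int \<Rightarrow> letter"
  assumes "h permutes {1..d}" and "v permutes {1..d}"
    and "transitive_on {1..d} h v"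
    and "sturmian \<sigma>"
    and "\<forall>n. \<mu> n \<in> {1..d}"
    and "\<forall>n. \<mu> (n + 1) = act h v M (\<sigma> n) (\<mu> n)"
  shows "\<forall>a\<in>{1..d}. \<forall>s. \<exists>n. \<mu> n = a \<and> \<sigma> n = s"
proof -
  have inj: "inj h" "inj v" using assms(1,2) by (simp_all add: permutes_inj)
  have range: "range \<mu> \<subseteq> {1..d}" using assms(5) by auto
  interpret sturmian_cocycle \<sigma> "act h v M" \<mu>
    using assms(4,6) inj_act[OF inj] finite_subset[OF range]
    by unfold_locales simp_all
  obtain S where S: "S \<subseteq> range \<mu>" "card S = min_card" "\<And>a. act h v M a ` S = S"
    by (rule invariant_set_of_min_card) blast
  have "S \<subseteq> {1..d}" using S(1) range by blast
  moreover have "S \<noteq> {}" using S(2) min_card_pos by auto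
  moreover have "h ` S = S" "v ` S = S"
    by (rule act_invariant_imp_generators_invariant[OF inj S(3)])+
  ultimately have "S = {1..d}"
    by (rule transitive_on_invariant_eq[OF assms(3) inj])
  then have "min_card = d" using S(2) by simp
  show ?thesis
  proof (intro ballI allI)
    fix a s assume "a \<in> {1..d}"
    obtain A where A: "A \<subseteq> {\<mu> n | n. \<sigma> n = s}" "card A = min_card"
      by (rule min_card_states_at_letter)
    have "A \<subseteq> {1..d}" using A(1) range by blast
    then have "A = {1..d}"
      using A(2) \<open>min_card = d\<close> by (simp add: card_subset_eq)
    then show "\<exists>n. \<mu> n = a \<and> \<sigma> n = s" using A(1) \<open>a \<in> {1..d}\<close> by blast
  qed
qed

end
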